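(* Let $y\in\mathbb{R}^n$, $X\in\mathbb{R}^{n\times p}$, $\lambda>0$, and consider the strong hierarchical lasso with quadratic loss written in the form $$\min_{\phi\in\mathbb{R}^{2p+2p^2}}\ \frac12\|y-\tilde X\phi\|^2+w^T\phi\quad\text{s.t.}\quad D\phi\ge0,\ L\phi=0,$$ with $\phi,\tilde X,w,D,L$ as in the context. Suppose $\hat\phi$ is a solution and let $\mathcal A(\hat\phi)=\{i:[D\hat\phi]_i>0\}$. Let $D_{-\mathcal A(\hat\phi)}$ be the submatrix of rows $D_i$ with $i\notin\mathcal A(\hat\phi)$ and $P=P_{\mathrm{null}(L)\cap\mathrm{null}(D_{-\mathcal A(\hat\phi)})}$. Then $$\hat\phi=(\tilde XP)^+\big(y-(P\tilde X^T)^+w\big)+b$$ for some $b\in\mathrm{null}(\tilde X)\cap\mathrm{null}(L)\cap\mathrm{null}(D_{-\mathcal A(\hat\phi)})$ satisfying $D_i\big[(\tilde XP)^+\big(y-(P\tilde X^T)^+w\big)+b\big]>0$ for all $i\in\mathcal A(\hat\phi)$.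
   Context: $A^+$ denotes the Moore–Penrose pseudoinverse and $P_S$ the orthogonal projection onto a subspace $S$; $\mathrm{null}(\cdot)$ is the null space. Let $x_j$ be the $j$th column of $X$ and $Z\in\mathbb{R}^{n\times p^2}$ the matrix whose column indexed by $(j,k)$ is $x_j*x_k$ (elementwise product), ordered consistently with the vectorization of $p\times p$ matrices. The variable is $\phi=(\beta^+,\beta^-,\mathrm{vec}(\Theta^+),\mathrm{vec}(\Theta^-))$ with $\beta^\pm\in\mathbb{R}^p$, $\Theta^\pm\in\mathbb{R}^{p\times p}$; $\tilde X=(X,\,-X,\,Z/2,\,-Z/2)$ and $w=(\lambda\mathbf 1_p,\lambda\mathbf 1_p,\frac{\lambda}{2}\mathbf 1_{p^2},\frac{\lambda}{2}\mathbf 1_{p^2})$. The rows of $D$ encode the inequality constraints: for each $j$, $\beta^+_j\ge0$, $\beta^-_j\ge0$, and $\beta^+_j+\beta^-_j-\mathbf 1^T(\Theta^+_j+\Theta^-_j)\ge0$ (where $\Theta^\pm_j$ is the $j$th row); and for each $j\ne k$, $\Theta^+_{jk}\ge0$, $\Theta^-_{jk}\ge0$. The rows of $L$ encode the equality constraints $\Theta^+_{jj}=\Theta^-_{jj}=0$ for all $j$ and $\Theta^+-\Theta^-=(\Theta^+-\Theta^-)^T$. (This is the strong hierarchical lasso $\min q(\beta_0,\beta^+-\beta^-,\Theta)+\lambda\mathbf 1^T(\beta^++\beta^-)+\frac\lambda2\sum_{j\ne k}|\Theta_{jk}|$ s.t. $\Theta=\Theta^T$, $\sum_k|\Theta_{jk}|\le\beta^+_j+\beta^-_j$,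 $\beta^\pm\ge0$, with quadratic loss, no intercept, rewritten with $\Theta=\Theta^+-\Theta^-$.) *)

theory Defs
  imports "Jordan_Normal_Form.Matrix_Kernel"
begin

definition pinv :: "real mat \<Rightarrow> real mat" where
  "pinv A = (THE B. B \<in> carrier_mat (dim_col A) (dim_row A) \<and>
      A * B * A = A \<and> B * A * B = B \<and>
      transpose_mat (A * B) = A * B \<and> transpose_mat (B * A) = B * A)"

definition proj_mat :: "nat \<Rightarrow> real vec set \<Rightarrow> real mat" where
  "proj_mat m S = (THE P. P \<in> carrier_mat m m \<and>
      (\<forall>v \<in> carrier_vec m. P *\<^sub>v v \<in> S \<and> (\<forall>s \<in> S. (v - P *\<^sub>v v) \<bullet> s = 0)))"

text \<open>Coordinates of phi = (beta+, beta-, vec Theta+, vec Theta-) in R^(2p+2p^2);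
  vec is column-major: entry (j,k) of a p x p matrix has index j + p*k.\<close>
definition shl_dim :: "nat \<Rightarrow> nat" where "shl_dim p = 2*p + 2*p^2"
definition ix_bp :: "nat \<Rightarrow> nat \<Rightarrow> nat" where "ix_bp p j = j"
definition ix_bm :: "nat \<Rightarrow> nat \<Rightarrow> nat" where "ix_bm p j = p + j"
definition ix_tp :: "nat \<Rightarrow> nat \<Rightarrow> nat \<Rightarrow> nat" where "ix_tp p j k = 2*p + (j + p*k)"
definition ix_tm :: "nat \<Rightarrow> nat \<Rightarrow> nat \<Rightarrow> nat" where "ix_tm p j k = 2*p + p^2 + (j + p*k)"

definition Zmat :: "real mat \<Rightarrow> real mat" where
  "Zmat X = mat (dim_row X) ((dim_col X)^2)
     (\<lambda>(i,c). X $$ (i, c mod dim_col X) * X $$ (i, c div dim_col X))"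

definition Xtil :: "real mat \<Rightarrow> real mat" where
  "Xtil X = (let p = dim_col X; Z = Zmat X in
     mat (dim_row X) (shl_dim p) (\<lambda>(i,c).
       if c < p then X $$ (i, c)
       else if c < 2*p then - X $$ (i, c - p)
       else if c < 2*p + p^2 then Z $$ (i, c - 2*p) / 2
       else - Z $$ (i, c - 2*p - p^2) / 2))"

definition wvec :: "nat \<Rightarrow> real \<Rightarrow> real vec" where
  "wvec p lam = vec (shl_dim p) (\<lambda>c. if c < 2*p then lam else lam / 2)"

text \<open>Row encoding beta+_j + beta-_j - 1^T (Theta+_j + Theta-_j) >= 0 (Theta_j = j-th row).\<close>
definition hier_row :: "nat \<Rightarrow> nat \<Rightarrow> real vec" where
  "hier_row p j = vec (shl_dim p) (\<lambda>c.
     (if c = ix_bp p j \<or> c = ix_bm p j then 1 else 0)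
     - (if \<exists>k < p. c = ix_tp p j k \<or> c = ix_tm p j k then 1 else 0))"

definition Dmat :: "nat \<Rightarrow> real mat" where
  "Dmat p = mat_of_rows (shl_dim p)
     (concat (map (\<lambda>j. [unit_vec (shl_dim p) (ix_bp p j), unit_vec (shl_dim p) (ix_bm p j), hier_row p j]) [0..<p])
      @ concat [[unit_vec (shl_dim p) (ix_tp p j k), unit_vec (shl_dim p) (ix_tm p j k)].
                 j \<leftarrow> [0..<p], k \<leftarrow> [0..<p], j \<noteq> k])"

text \<open>Equality constraints L phi = 0: Theta+_jj = Theta-_jj = 0 and Theta+ - Theta- symmetric.\<close>
definition Lmat :: "nat \<Rightarrow> real mat" where
  "Lmat p = mat_of_rows (shl_dim p)
     (concat (map (\<lambda>j. [unit_vec (shl_dim p) (ix_tp p j j), unit_vec (shl_dim p) (ix_tm p j j)]) [0..<p])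
      @ [ unit_vec (shl_dim p) (ix_tp p j k) - unit_vec (shl_dim p) (ix_tm p j k)
          - unit_vec (shl_dim p) (ix_tp p k j) + unit_vec (shl_dim p) (ix_tm p k j).
          j \<leftarrow> [0..<p], k \<leftarrow> [0..<p], j < k])"

definition shl_obj :: "real mat \<Rightarrow> real vec \<Rightarrow> real \<Rightarrow> real vec \<Rightarrow> real" where
  "shl_obj X y lam \<phi> = (1/2) * ((y - Xtil X *\<^sub>v \<phi>) \<bullet> (y - Xtil X *\<^sub>v \<phi>)) + wvec (dim_col X) lam \<bullet> \<phi>"

definition shl_feasible :: "nat \<Rightarrow> real vec \<Rightarrow> bool" where
  "shl_feasible p \<phi> \<longleftrightarrow> \<phi> \<in> carrier_vec (shl_dim p) \<and>
     (\<forall>i < dim_row (Dmat p). (Dmat p *\<^sub>v \<phi>) $ i \<ge> 0) \<and> Lmat p *\<^sub>v \<phi> = 0\<^sub>v (dim_row (Lmat p))"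

definition active_set :: "nat \<Rightarrow> real vec \<Rightarrow> nat set" where
  "active_set p \<phi> = {i. i < dim_row (Dmat p) \<and> (Dmat p *\<^sub>v \<phi>) $ i > 0}"

definition rows_out :: "real mat \<Rightarrow> nat set \<Rightarrow> real mat" where
  "rows_out D A = mat_of_rows (dim_col D) [row D i. i \<leftarrow> [0..<dim_row D], i \<notin> A]"

end

theory Submission
  imports Defs
begin

text \<open>Let \<open>S = null(L) \<inter> null(D\<^sub>-\<^sub>A)\<close> and \<open>P\<close> the orthogonal projection onto \<open>S\<close>.
  Every \<open>d \<in> S\<close> is a two-sided feasible direction at \<open>\<phi>\<close>: inactive constraints stay zero and
  active ones stay positive for small steps. Hence the objective is stationary along \<open>S\<close>,
  i.e. \<open>P (X\<^sup>T (y - X \<phi>) - w) = 0\<close>, where \<open>X\<close> stands for \<open>Xtil X\<close>. As \<open>P \<phi> = \<phi>\<close>, this says that \<open>\<phi>\<close>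
  solves the normal equations \<open>(X P)\<^sup>T (X P) \<phi> = (X P)\<^sup>T y - P w\<close>, of which
  \<open>u = (X P)\<^sup>+ (y - (P X\<^sup>T)\<^sup>+ w)\<close> is a solution lying in \<open>S\<close>. So \<open>b = \<phi> - u \<in> S\<close> and
  \<open>(X P) b = 0\<close>, i.e. \<open>X b = 0\<close>; the active constraints hold since \<open>u + b = \<phi>\<close>.
  Projections and pseudoinverses are defined by description; they exist by a Gram--Schmidt
  construction of projections onto spans of finitely many vectors.\<close>

section \<open>Orthogonal projections\<close>

lemma self_scalar_prod_eq_0:
  fixes x :: "real vec"
  assumes "x \<in> carrier_vec n" "x \<bullet> x = 0"
  shows "x = 0\<^sub>v n"
  using assms conjugate_square_eq_0_vec[of x n] by simp

lemma vec_eq_if_diff_eq_0: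
  fixes x y :: "'a :: ab_group_add vec"
  assumes "x \<in> carrier_vec n" "y \<in> carrier_vec n" "x - y = 0\<^sub>v n"
  shows "x = y"
proof (rule eq_vecI)
  fix i assume "i < dim_vec y"
  then have "x $ i - y $ i = (x - y) $ i" using assms(1,2) by simp
  also have "\<dots> = 0" using assms \<open>i < dim_vec y\<close> by simp
  finally show "x $ i = y $ i" by simp
qed (use assms in simp)

lemma eq_vec_by_scalar_prod:
  fixes x y :: "real vec"
  assumes x: "x \<in> carrier_vec n" and y: "y \<in> carrier_vec n"
    and eq: "\<And>v. v \<in> carrier_vec n \<Longrightarrow> x \<bullet> v = y \<bullet> v"
  shows "x = y"
proof -
  have d: "x - y \<in> carrier_vec n" using x y by simp
  have "(x - y) \<bullet> (x - y) = 0"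
    using minus_scalar_prod_distrib[OF x y d] eq[OF d] by simp
  then show ?thesis using vec_eq_if_diff_eq_0[OF x y] self_scalar_prod_eq_0[OF d] by simp
qed

lemma eq_mat_by_mult_vec:
  fixes A B :: "real mat"
  assumes A: "A \<in> carrier_mat nr nc" and B: "B \<in> carrier_mat nr nc"
    and eq: "\<And>v. v \<in> carrier_vec nc \<Longrightarrow> A *\<^sub>v v = B *\<^sub>v v"
  shows "A = B"
proof (rule mat_col_eqI)
  fix j assume "j < dim_col B"
  then have "col A j = A *\<^sub>v unit_vec nc j" "col B j = B *\<^sub>v unit_vec nc j"
    using A B by auto
  then show "col A j = col B j" using eq by simp
qed (use A B in auto)

definition is_orth_proj :: "nat \<Rightarrow> real vec set \<Rightarrow> real mat \<Rightarrow> bool" where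
  "is_orth_proj m S Q \<longleftrightarrow> Q \<in> carrier_mat m m \<and>
      (\<forall>v \<in> carrier_vec m. Q *\<^sub>v v \<in> S \<and> (\<forall>s \<in> S. (v - Q *\<^sub>v v) \<bullet> s = 0))"

lemma is_orth_projD:
  assumes "is_orth_proj m S Q"
  shows "Q \<in> carrier_mat m m"
    and "v \<in> carrier_vec m \<Longrightarrow> Q *\<^sub>v v \<in> S"
    and "v \<in> carrier_vec m \<Longrightarrow> s \<in> S \<Longrightarrow> (v - Q *\<^sub>v v) \<bullet> s = 0"
  using assms unfolding is_orth_proj_def by auto

text \<open>Closure under subtraction is all of the subspace structure the projection argument uses.\<close>

locale vec_subgroup =
  fixes m :: nat and S :: "real vec set"
  assumes subset_carrier: "S \<subseteq> carrier_vec m"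
    and diff_closed: "s \<in> S \<Longrightarrow> t \<in> S \<Longrightarrow> s - t \<in> S"
begin

lemma orth_proj_fixes:
  assumes Q: "is_orth_proj m S Q" and s: "s \<in> S"
  shows "Q *\<^sub>v s = s"
proof -
  have sc: "s \<in> carrier_vec m" using s subset_carrier by auto
  have Qc: "Q \<in> carrier_mat m m" using is_orth_projD(1)[OF Q] .
  have d: "s - Q *\<^sub>v s \<in> S" using diff_closed[OF s is_orth_projD(2)[OF Q sc]] .
  have "(s - Q *\<^sub>v s) \<bullet> (s - Q *\<^sub>v s) = 0" using is_orth_projD(3)[OF Q sc d] .
  then have "s - Q *\<^sub>v s = 0\<^sub>v m" using self_scalar_prod_eq_0 d subset_carrier by blast
  then show ?thesis using vec_eq_if_diff_eq_0[of s m "Q *\<^sub>v s"] sc Qc by simp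
qed

lemma orth_proj_idem:
  assumes Q: "is_orth_proj m S Q"
  shows "Q * Q = Q"
proof (rule eq_mat_by_mult_vec[of _ m m])
  note Qc = is_orth_projD(1)[OF Q]
  fix v :: "real vec" assume v: "v \<in> carrier_vec m"
  have "Q * Q *\<^sub>v v = Q *\<^sub>v (Q *\<^sub>v v)" using Qc v by simp
  also have "\<dots> = Q *\<^sub>v v" using orth_proj_fixes[OF Q is_orth_projD(2)[OF Q v]] .
  finally show "Q * Q *\<^sub>v v = Q *\<^sub>v v" .
qed (use is_orth_projD(1)[OF Q] in auto)

lemma orth_proj_symmetric:
  assumes Q: "is_orth_proj m S Q"
  shows "transpose_mat Q = Q"
proof (rule eq_mat_by_mult_vec[of _ m m])
  note Qc = is_orth_projD(1)[OF Q]
  fix u :: "real vec" assume u: "u \<in> carrier_vec m"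
  show "transpose_mat Q *\<^sub>v u = Q *\<^sub>v u"
  proof (rule eq_vec_by_scalar_prod[of _ m])
    fix v :: "real vec" assume v: "v \<in> carrier_vec m"
    have Qu: "Q *\<^sub>v u \<in> carrier_vec m" and Qv: "Q *\<^sub>v v \<in> carrier_vec m" using Qc u v by auto
    text \<open>Both sides equal \<open>(Q u) \<bullet> (Q v)\<close>.\<close>
    have "(transpose_mat Q *\<^sub>v u) \<bullet> v = u \<bullet> (Q *\<^sub>v v)"
      by (rule transpose_vec_mult_scalar[OF Qc v u])
    also have "\<dots> = (Q *\<^sub>v u) \<bullet> (Q *\<^sub>v v)"
      using is_orth_projD(3)[OF Q u is_orth_projD(2)[OF Q v]] minus_scalar_prod_distrib[OF u Qu Qv]
      by simp
    also have "\<dots> = (Q *\<^sub>v u) \<bullet> v"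
      using is_orth_projD(3)[OF Q v is_orth_projD(2)[OF Q u]] minus_scalar_prod_distrib[OF v Qv Qu]
        comm_scalar_prod[OF Qu v] comm_scalar_prod[OF Qu Qv] by simp
    finally show "(transpose_mat Q *\<^sub>v u) \<bullet> v = (Q *\<^sub>v u) \<bullet> v" .
  qed (use Qc u in auto)
qed (use is_orth_projD(1)[OF Q] in auto)

lemma orth_proj_unique:
  assumes Q1: "is_orth_proj m S Q1" and Q2: "is_orth_proj m S Q2"
  shows "Q1 = Q2"
proof (rule eq_mat_by_mult_vec[of _ m m])
  note Qc = is_orth_projD(1)[OF Q1] is_orth_projD(1)[OF Q2]
  fix v :: "real vec" assume v: "v \<in> carrier_vec m"
  define d where "d = Q1 *\<^sub>v v - Q2 *\<^sub>v v"
  have d: "d \<in> S" unfolding d_def using diff_closed is_orth_projD(2) Q1 Q2 v by blast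
  have c: "v - Q2 *\<^sub>v v \<in> carrier_vec m" "v - Q1 *\<^sub>v v \<in> carrier_vec m" "d \<in> carrier_vec m"
    using Qc v d subset_carrier by auto
  text \<open>\<open>d\<close> is the difference of two residuals, both orthogonal to \<open>d \<in> S\<close>.\<close>
  have "d = (v - Q2 *\<^sub>v v) - (v - Q1 *\<^sub>v v)"
    unfolding d_def using Qc v by (intro eq_vecI) auto
  then have "d \<bullet> d = 0"
    using minus_scalar_prod_distrib[OF c] is_orth_projD(3)[OF Q1 v d] is_orth_projD(3)[OF Q2 v d]
    by simp
  then have "d = 0\<^sub>v m" using self_scalar_prod_eq_0 c(3) by blast
  then show "Q1 *\<^sub>v v = Q2 *\<^sub>v v"
    unfolding d_def using vec_eq_if_diff_eq_0[of "Q1 *\<^sub>v v" m] Qc v by simp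
qed (use is_orth_projD(1) Q1 Q2 in auto)

lemma proj_mat_eq:
  assumes "is_orth_proj m S Q"
  shows "proj_mat m S = Q"
proof -
  have "\<exists>!Q. is_orth_proj m S Q" using assms orth_proj_unique by blast
  then have "is_orth_proj m S (proj_mat m S)"
    unfolding proj_mat_def is_orth_proj_def[symmetric] by (rule theI')
  then show ?thesis using orth_proj_unique assms by blast
qed

end

fun list_span :: "nat \<Rightarrow> real vec list \<Rightarrow> real vec set" where
  "list_span m [] = {0\<^sub>v m}"
| "list_span m (a # vs) = {c \<cdot>\<^sub>v a + s | c s. s \<in> list_span m vs}"

lemma list_span_ConsI: "s \<in> list_span m vs \<Longrightarrow> c \<cdot>\<^sub>v a + s \<in> list_span m (a # vs)"
  by auto

lemma list_span_carrier:
  "set vs \<subseteq> carrier_vec m \<Longrightarrow> s \<in> list_span m vs \<Longrightarrow> s \<in> carrier_vec m"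
  by (induction vs arbitrary: s) auto

lemma zero_in_list_span: "set vs \<subseteq> carrier_vec m \<Longrightarrow> 0\<^sub>v m \<in> list_span m vs"
proof (induction vs)
  case (Cons a vs)
  then have eq: "0 \<cdot>\<^sub>v a + 0\<^sub>v m = 0\<^sub>v m" by (intro eq_vecI) auto
  have "0 \<cdot>\<^sub>v a + 0\<^sub>v m \<in> list_span m (a # vs)"
    by (rule list_span_ConsI) (use Cons in simp)
  then show ?case by (simp only: eq)
qed simp

lemma list_span_diff_smult:
  assumes "set vs \<subseteq> carrier_vec m" "s \<in> list_span m vs" "t \<in> list_span m vs"
  shows "s - k \<cdot>\<^sub>v t \<in> list_span m vs"
  using assms
proof (induction vs arbitrary: s t)
  case (Cons a vs)
  from Cons.prems obtain c s' d t' where s: "s = c \<cdot>\<^sub>v a + s'" "s' \<in> list_span m vs"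
    and t: "t = d \<cdot>\<^sub>v a + t'" "t' \<in> list_span m vs" by auto
  have "s' \<in> carrier_vec m" "t' \<in> carrier_vec m" "a \<in> carrier_vec m"
    using s t Cons.prems list_span_carrier[of vs m] by auto
  then have "s - k \<cdot>\<^sub>v t = (c - k * d) \<cdot>\<^sub>v a + (s' - k \<cdot>\<^sub>v t')"
    unfolding s t by (intro eq_vecI) (auto simp: algebra_simps)
  then show ?case using Cons s t list_span_ConsI by simp
qed auto

lemma generator_in_list_span:
  "set vs \<subseteq> carrier_vec m \<Longrightarrow> a \<in> set vs \<Longrightarrow> a \<in> list_span m vs"
proof (induction vs)
  case (Cons b vs)
  show ?case
  proof (cases "a = b")
    case True
    then have eq: "1 \<cdot>\<^sub>v b + 0\<^sub>v m = a" using Cons.prems by (intro eq_vecI) auto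
    have "1 \<cdot>\<^sub>v b + 0\<^sub>v m \<in> list_span m (b # vs)"
      by (rule list_span_ConsI) (use zero_in_list_span[of vs m] Cons.prems in simp)
    then show ?thesis by (simp only: eq)
  next
    case False
    then have eq: "0 \<cdot>\<^sub>v b + a = a" using Cons.prems by (intro eq_vecI) auto
    have "0 \<cdot>\<^sub>v b + a \<in> list_span m (b # vs)"
      by (rule list_span_ConsI) (use False Cons in simp)
    then show ?thesis by (simp only: eq)
  qed
qed simp

lemma orthogonal_list_span:
  assumes "set vs \<subseteq> carrier_vec m" "v \<in> carrier_vec m" "\<And>a. a \<in> set vs \<Longrightarrow> a \<bullet> v = 0"
    and "s \<in> list_span m vs"
  shows "s \<bullet> v = 0"
  using assms
proof (induction vs arbitrary: s)
  case (Cons a vs)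
  from Cons.prems obtain c s' where s: "s = c \<cdot>\<^sub>v a + s'" "s' \<in> list_span m vs" by auto
  have "s' \<in> carrier_vec m" "a \<in> carrier_vec m"
    using s Cons.prems list_span_carrier[of vs m] by auto
  then have "s \<bullet> v = c * (a \<bullet> v) + s' \<bullet> v"
    unfolding s using Cons.prems by (simp add: add_scalar_prod_distrib[of _ m])
  then show ?case using Cons s by auto
qed simp

lemma list_span_subgroup: "set vs \<subseteq> carrier_vec m \<Longrightarrow> vec_subgroup m (list_span m vs)"
proof
  assume vs: "set vs \<subseteq> carrier_vec m"
  show "list_span m vs \<subseteq> carrier_vec m" using list_span_carrier[OF vs] by blast
  fix s t assume "s \<in> list_span m vs" "t \<in> list_span m vs"
  then show "s - t \<in> list_span m vs"
    using list_span_diff_smult[OF vs, of s t 1] list_span_carrier[OF vs] by simp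
qed

lemma list_span_subset_range:
  assumes "set vs \<subseteq> carrier_vec m" "s \<in> list_span m vs"
  shows "\<exists>c \<in> carrier_vec (length vs). mat_of_cols m vs *\<^sub>v c = s"
  using assms
proof (induction vs arbitrary: s)
  case Nil
  then have "mat_of_cols m [] *\<^sub>v vec 0 (\<lambda>_. 0) = s" by (intro eq_vecI) auto
  then show ?case by (intro bexI[of _ "vec 0 (\<lambda>_. 0)"]) auto
next
  case (Cons a vs)
  from Cons.prems obtain c0 s' where s: "s = c0 \<cdot>\<^sub>v a + s'" "s' \<in> list_span m vs" by auto
  from Cons.IH[of s'] Cons.prems s obtain c
    where c: "c \<in> carrier_vec (length vs)" "mat_of_cols m vs *\<^sub>v c = s'" by auto
  have a: "a \<in> carrier_vec m" and s'c: "s' \<in> carrier_vec m"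
    using Cons.prems s list_span_carrier[of vs m] by auto
  have "mat_of_cols m (a # vs) *\<^sub>v vCons c0 c = s"
  proof (rule eq_vecI)
    fix i assume "i < dim_vec s"
    then have i: "i < m" using a s'c s by simp
    have "(mat_of_cols m (a # vs) *\<^sub>v vCons c0 c) $ i
        = (\<Sum>j<Suc (length vs). (a # vs) ! j $ i * vCons c0 c $ j)"
      using i c by (simp add: scalar_prod_def row_def mat_of_cols_def lessThan_atLeast0)
    also have "\<dots> = c0 * a $ i + (\<Sum>j<length vs. vs ! j $ i * c $ j)"
      by (subst sum.lessThan_Suc_shift) (simp add: mult.commute)
    also have "\<dots> = c0 * a $ i + (mat_of_cols m vs *\<^sub>v c) $ i"
      using i c(1) by (simp add: scalar_prod_def row_def mat_of_cols_def lessThan_atLeast0)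
    also have "\<dots> = s $ i" using i a s'c unfolding s c(2) by simp
    finally show "(mat_of_cols m (a # vs) *\<^sub>v vCons c0 c) $ i = s $ i" .
  qed (use a s'c s in simp)
  then show ?case using c by (intro bexI[of _ "vCons c0 c"]) auto
qed

definition rank_one_proj :: "nat \<Rightarrow> real vec \<Rightarrow> real mat" where
  "rank_one_proj m r = mat m m (\<lambda>(i, j). r $ i * r $ j / (r \<bullet> r))"

lemma rank_one_proj_mult_vec:
  assumes r: "r \<in> carrier_vec m" and v: "v \<in> carrier_vec m"
  shows "rank_one_proj m r *\<^sub>v v = (r \<bullet> v / (r \<bullet> r)) \<cdot>\<^sub>v r"
proof (rule eq_vecI)
  fix i assume "i < dim_vec ((r \<bullet> v / (r \<bullet> r)) \<cdot>\<^sub>v r)"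
  then have i: "i < m" using r by simp
  have "(rank_one_proj m r *\<^sub>v v) $ i = (\<Sum>j<m. r $ i * r $ j / (r \<bullet> r) * v $ j)"
    using i v by (simp add: rank_one_proj_def scalar_prod_def row_def lessThan_atLeast0)
  also have "\<dots> = r $ i * (\<Sum>j<m. r $ j * v $ j) / (r \<bullet> r)"
    by (simp add: sum_distrib_left sum_divide_distrib algebra_simps)
  also have "\<dots> = ((r \<bullet> v / (r \<bullet> r)) \<cdot>\<^sub>v r) $ i"
    using i r v by (simp add: scalar_prod_def lessThan_atLeast0)
  finally show "(rank_one_proj m r *\<^sub>v v) $ i = ((r \<bullet> v / (r \<bullet> r)) \<cdot>\<^sub>v r) $ i" .
qed (use r in \<open>auto simp: rank_one_proj_def\<close>)

text \<open>One Gram--Schmidt step: the residual \<open>r\<close> of the new generator is orthogonal to the old span,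
  so adding the projection onto \<open>r\<close> extends the projection to the enlarged span. For \<open>r = 0\<close>
  the rank-one term vanishes because \<open>x / 0 = 0\<close>.\<close>

lemma orth_proj_list_span_Cons:
  assumes ws: "set ws \<subseteq> carrier_vec m" and a: "a \<in> carrier_vec m"
    and Q: "is_orth_proj m (list_span m ws) Q"
  shows "is_orth_proj m (list_span m (a # ws)) (Q + rank_one_proj m (a - Q *\<^sub>v a))"
proof -
  note Qc = is_orth_projD(1)[OF Q] and Q_in = is_orth_projD(2)[OF Q]
    and Q_orth = is_orth_projD(3)[OF Q]
  define r where "r = a - Q *\<^sub>v a"
  have Qa: "Q *\<^sub>v a \<in> carrier_vec m" "Q *\<^sub>v a \<in> list_span m ws" using Qc a Q_in by auto
  have rc: "r \<in> carrier_vec m" unfolding r_def using a Qc by simp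
  have r_orth: "r \<bullet> s = 0" if "s \<in> list_span m ws" for s
    unfolding r_def using Q_orth[OF a that] .
  have Rc: "rank_one_proj m r \<in> carrier_mat m m" by (simp add: rank_one_proj_def)
  have "is_orth_proj m (list_span m (a # ws)) (Q + rank_one_proj m r)"
    unfolding is_orth_proj_def
  proof (intro conjI ballI)
    show "Q + rank_one_proj m r \<in> carrier_mat m m" using Qc Rc by simp
    fix v :: "real vec" assume v: "v \<in> carrier_vec m"
    define t where "t = r \<bullet> v / (r \<bullet> r)"
    have Qv: "Q *\<^sub>v v \<in> carrier_vec m" "Q *\<^sub>v v \<in> list_span m ws" using Qc v Q_in by auto
    have Pv: "(Q + rank_one_proj m r) *\<^sub>v v = Q *\<^sub>v v + t \<cdot>\<^sub>v r"
      unfolding t_def using add_mult_distrib_mat_vec[OF Qc Rc v] rank_one_proj_mult_vec[OF rc v]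
      by simp
    have "Q *\<^sub>v v + t \<cdot>\<^sub>v r = t \<cdot>\<^sub>v a + (Q *\<^sub>v v - t \<cdot>\<^sub>v (Q *\<^sub>v a))"
      unfolding r_def using a Qa Qv Qc by (intro eq_vecI) (auto simp: algebra_simps)
    moreover have "Q *\<^sub>v v - t \<cdot>\<^sub>v (Q *\<^sub>v a) \<in> list_span m ws"
      using list_span_diff_smult[OF ws Qv(2) Qa(2)] .
    ultimately show "(Q + rank_one_proj m r) *\<^sub>v v \<in> list_span m (a # ws)"
      unfolding Pv using list_span_ConsI by simp
    fix s assume "s \<in> list_span m (a # ws)"
    then obtain c s' where s: "s = c \<cdot>\<^sub>v a + s'" "s' \<in> list_span m ws" by auto
    define w where "w = v - Q *\<^sub>v v"
    define s'' where "s'' = s' - (- c) \<cdot>\<^sub>v (Q *\<^sub>v a)"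
    have wc: "w \<in> carrier_vec m" unfolding w_def using v Qv by simp
    have s''c: "s'' \<in> carrier_vec m" "s'' \<in> list_span m ws"
      unfolding s''_def using list_span_diff_smult[OF ws s(2) Qa(2)] list_span_carrier[OF ws]
      by auto
    have s_split: "s = c \<cdot>\<^sub>v r + s''"
      unfolding s s''_def r_def using a Qa Qc list_span_carrier[OF ws s(2)]
      by (intro eq_vecI) (auto simp: algebra_simps)
    have w_orth: "w \<bullet> s'' = 0" unfolding w_def using Q_orth[OF v s''c(2)] .
    have wr: "w \<bullet> r = r \<bullet> v"
      using comm_scalar_prod[OF wc rc] scalar_prod_minus_distrib[OF rc v Qv(1)] r_orth[OF Qv(2)]
      unfolding w_def by simp
    have trr: "t * (r \<bullet> r) = r \<bullet> v"
    proof (cases "r \<bullet> r = 0")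
      case True
      then show ?thesis using self_scalar_prod_eq_0[OF rc] v by simp
    qed (simp add: t_def)
    have "v - (Q + rank_one_proj m r) *\<^sub>v v = w - t \<cdot>\<^sub>v r"
      unfolding Pv w_def using v Qv Qc rc by (intro eq_vecI) auto
    also have "(w - t \<cdot>\<^sub>v r) \<bullet> s = c * (w \<bullet> r - t * (r \<bullet> r)) + (w \<bullet> s'' - t * (r \<bullet> s''))"
      unfolding s_split using wc rc s''c(1)
      by (simp add: scalar_prod_add_distrib[of _ m] minus_scalar_prod_distrib[of _ m]
          algebra_simps)
    also have "\<dots> = 0" using wr trr w_orth r_orth[OF s''c(2)] by simp
    finally show "(v - (Q + rank_one_proj m r) *\<^sub>v v) \<bullet> s = 0" .
  qed
  then show ?thesis unfolding r_def .
qed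

lemma orth_proj_list_span_exists:
  "set vs \<subseteq> carrier_vec m \<Longrightarrow> \<exists>Q. is_orth_proj m (list_span m vs) Q"
proof (induction vs)
  case Nil
  have "is_orth_proj m (list_span m []) (0\<^sub>m m m)"
    unfolding is_orth_proj_def by (auto simp: scalar_prod_def)
  then show ?case by blast
next
  case (Cons a ws)
  then show ?case using orth_proj_list_span_Cons[of ws m a] by auto
qed

definition orth_compl :: "nat \<Rightarrow> real vec list \<Rightarrow> real vec set" where
  "orth_compl m vs = {v \<in> carrier_vec m. \<forall>a \<in> set vs. a \<bullet> v = 0}"

lemma orth_compl_append: "orth_compl m (vs @ ws) = orth_compl m vs \<inter> orth_compl m ws"
  unfolding orth_compl_def by auto

lemma mat_kernel_eq_orth_compl:
  assumes "K \<in> carrier_mat r m"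
  shows "mat_kernel K = orth_compl m (rows K)"
  using assms unfolding mat_kernel_def orth_compl_def by (auto simp: vec_eq_iff rows_def)

lemma orth_compl_subgroup:
  assumes "set vs \<subseteq> carrier_vec m"
  shows "vec_subgroup m (orth_compl m vs)"
  using assms by unfold_locales (auto simp: orth_compl_def scalar_prod_minus_distrib[of _ m])

lemma orth_proj_orth_compl_exists:
  assumes vs: "set vs \<subseteq> carrier_vec m"
  shows "\<exists>P. is_orth_proj m (orth_compl m vs) P"
proof -
  obtain Q where Q: "is_orth_proj m (list_span m vs) Q"
    using orth_proj_list_span_exists[OF vs] by blast
  note Qc = is_orth_projD(1)[OF Q]
  have "is_orth_proj m (orth_compl m vs) (1\<^sub>m m - Q)"
    unfolding is_orth_proj_def
  proof (intro conjI ballI)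
    show "1\<^sub>m m - Q \<in> carrier_mat m m" using Qc by (simp add: minus_carrier_mat)
    fix v :: "real vec" assume v: "v \<in> carrier_vec m"
    have Qv: "Q *\<^sub>v v \<in> carrier_vec m" "Q *\<^sub>v v \<in> list_span m vs"
      using Qc v is_orth_projD(2)[OF Q v] by auto
    have Pv: "(1\<^sub>m m - Q) *\<^sub>v v = v - Q *\<^sub>v v"
      using minus_mult_distrib_mat_vec[of "1\<^sub>m m" m m Q v] Qc v by simp
    have "a \<bullet> (v - Q *\<^sub>v v) = 0" if "a \<in> set vs" for a
      using is_orth_projD(3)[OF Q v generator_in_list_span[OF vs that]]
        comm_scalar_prod[of a m "v - Q *\<^sub>v v"] vs that v Qv by auto
    then show "(1\<^sub>m m - Q) *\<^sub>v v \<in> orth_compl m vs"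
      unfolding Pv orth_compl_def using v Qv by simp
    fix s assume s: "s \<in> orth_compl m vs"
    have "v - (1\<^sub>m m - Q) *\<^sub>v v = Q *\<^sub>v v" unfolding Pv using v Qv by (intro eq_vecI) auto
    then show "(v - (1\<^sub>m m - Q) *\<^sub>v v) \<bullet> s = 0"
      using orthogonal_list_span[OF vs _ _ Qv(2), of s] s unfolding orth_compl_def by simp
  qed
  then show ?thesis by blast
qed

lemma proj_mat_kernel_inter:
  assumes K1: "K1 \<in> carrier_mat r1 m" and K2: "K2 \<in> carrier_mat r2 m"
  defines "S \<equiv> mat_kernel K1 \<inter> mat_kernel K2"
  shows "vec_subgroup m S" and "is_orth_proj m S (proj_mat m S)"
proof -
  have S_eq: "S = orth_compl m (rows K1 @ rows K2)"
    unfolding S_def orth_compl_append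
    using mat_kernel_eq_orth_compl[OF K1] mat_kernel_eq_orth_compl[OF K2] by simp
  have rows: "set (rows K1 @ rows K2) \<subseteq> carrier_vec m"
    using set_rows_carrier[OF K1] set_rows_carrier[OF K2] by auto
  show S: "vec_subgroup m S" unfolding S_eq using orth_compl_subgroup[OF rows] .
  obtain P where "is_orth_proj m S P" unfolding S_eq using orth_proj_orth_compl_exists[OF rows] ..
  then show "is_orth_proj m S (proj_mat m S)" using vec_subgroup.proj_mat_eq[OF S] by simp
qed

section \<open>The Moore--Penrose pseudoinverse\<close>

definition is_pinv :: "real mat \<Rightarrow> real mat \<Rightarrow> bool" where
  "is_pinv A B \<longleftrightarrow> B \<in> carrier_mat (dim_col A) (dim_row A) \<and>
      A * B * A = A \<and> B * A * B = B \<and>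
      transpose_mat (A * B) = A * B \<and> transpose_mat (B * A) = B * A"

lemma is_pinvD:
  assumes "is_pinv A B"
  shows "B \<in> carrier_mat (dim_col A) (dim_row A)" "A * B * A = A" "B * A * B = B"
    "transpose_mat (A * B) = A * B" "transpose_mat (B * A) = B * A"
  using assms unfolding is_pinv_def by auto

lemma is_pinv_transpose_mult:
  assumes M: "M \<in> carrier_mat n N" and B: "is_pinv M B"
  shows "transpose_mat M * (M * B) = transpose_mat M"
proof -
  have Bc: "B \<in> carrier_mat N n" using is_pinvD(1)[OF B] M by simp
  have "transpose_mat (M * B * M) = transpose_mat M * transpose_mat (M * B)"
    using transpose_mult[of "M * B" n n M N] M Bc by simp
  then show ?thesis using is_pinvD(2,4)[OF B] by simp
qed

lemma is_pinv_mult_transpose: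
  assumes M: "M \<in> carrier_mat n N" and B: "is_pinv M B"
  shows "B * M * transpose_mat M = transpose_mat M"
proof -
  have Bc: "B \<in> carrier_mat N n" using is_pinvD(1)[OF B] M by simp
  have "transpose_mat (M * (B * M)) = transpose_mat (B * M) * transpose_mat M"
    using transpose_mult[of M n N "B * M" N] M Bc by simp
  then show ?thesis using is_pinvD(2,5)[OF B] M Bc by (simp add: assoc_mult_mat[of M n N B n M N])
qed

lemma is_pinv_unique:
  assumes A: "A \<in> carrier_mat n N" and B1: "is_pinv A B1" and B2: "is_pinv A B2"
  shows "B1 = B2"
proof -
  have c: "B1 \<in> carrier_mat N n" "B2 \<in> carrier_mat N n"
    using is_pinvD(1) B1 B2 A by auto
  note 1 = is_pinvD(2-5)[OF B1] and 2 = is_pinvD(2-5)[OF B2]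
  let ?At = "transpose_mat A"
  have ct: "transpose_mat B1 \<in> carrier_mat n N" "transpose_mat B2 \<in> carrier_mat n N"
    "transpose_mat A \<in> carrier_mat N n" using A c by auto
  have AB1: "A * B1 = transpose_mat B1 * ?At" using transpose_mult[OF A c(1)] 1(3) by simp
  have B2A: "B2 * A = ?At * transpose_mat B2" using transpose_mult[OF c(2) A] 2(4) by simp
  note At_AB2 = is_pinv_transpose_mult[OF A B2] and B1A_At = is_pinv_mult_transpose[OF A B1]
  have "B1 = B1 * (A * B1)" using 1(2) A c by simp
  also have "\<dots> = B1 * (transpose_mat B1 * (?At * (A * B2)))" using AB1 At_AB2 by simp
  also have "\<dots> = (B1 * (transpose_mat B1 * ?At)) * (A * B2)"
    using assoc_mult_mat[OF c(1) mult_carrier_mat[OF ct(1) ct(3)] mult_carrier_mat[OF A c(2)]]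
      assoc_mult_mat[OF ct(1) ct(3) mult_carrier_mat[OF A c(2)]] by metis
  also have "\<dots> = B1 * (A * B2)" using 1(2) AB1 A c by simp
  finally have e1: "B1 = B1 * (A * B2)" .
  have "B2 = (B2 * A) * B2" using 2(2) A c by simp
  also have "\<dots> = ((B1 * A) * ?At) * transpose_mat B2 * B2" using B2A B1A_At by simp
  also have "\<dots> = (B1 * A) * ((?At * transpose_mat B2) * B2)"
    using assoc_mult_mat[OF mult_carrier_mat[OF c(1) A] ct(3) ct(2)]
      assoc_mult_mat[OF mult_carrier_mat[OF mult_carrier_mat[OF c(1) A] ct(3)] ct(2) c(2)]
      assoc_mult_mat[OF mult_carrier_mat[OF c(1) A] mult_carrier_mat[OF ct(3) ct(2)] c(2)]
      assoc_mult_mat[OF ct(3) ct(2) c(2)] by metis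
  also have "\<dots> = B1 * (A * B2)" using 2(2) B2A A c by simp
  finally show ?thesis using e1 by simp
qed

lemma mult_orth_proj_rows:
  assumes M: "M \<in> carrier_mat n N" and Q: "is_orth_proj N (list_span N (rows M)) Q"
  shows "M * Q = M"
proof (rule eq_mat_by_mult_vec[of _ n N])
  note Qc = is_orth_projD(1)[OF Q]
  have rs: "set (rows M) \<subseteq> carrier_vec N" using M by (auto simp: rows_def)
  fix v :: "real vec" assume v: "v \<in> carrier_vec N"
  show "M * Q *\<^sub>v v = M *\<^sub>v v"
  proof (rule eq_vecI)
    fix i assume "i < dim_vec (M *\<^sub>v v)"
    then have i: "i < n" using M by simp
    have ri: "row M i \<in> carrier_vec N" "row M i \<in> list_span N (rows M)"
      using M i generator_in_list_span[OF rs] by (auto simp: rows_def)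
    have Qv: "Q *\<^sub>v v \<in> carrier_vec N" using Qc v by simp
    have "(v - Q *\<^sub>v v) \<bullet> row M i = 0" using is_orth_projD(3)[OF Q v ri(2)] .
    then have "row M i \<bullet> (Q *\<^sub>v v) = row M i \<bullet> v"
      using comm_scalar_prod[OF ri(1), of "v - Q *\<^sub>v v"] scalar_prod_minus_distrib[OF ri(1) v Qv]
        v Qv by simp
    then show "(M * Q *\<^sub>v v) $ i = (M *\<^sub>v v) $ i" using M Qc v i by simp
  qed (use M Qc v in simp)
qed (use M is_orth_projD(1)[OF Q] in auto)

lemma orth_proj_rows_kills_kernel:
  assumes M: "M \<in> carrier_mat n N" and Q: "is_orth_proj N (list_span N (rows M)) Q"
    and z: "z \<in> mat_kernel M"
  shows "Q *\<^sub>v z = 0\<^sub>v N"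
proof -
  have rs: "set (rows M) \<subseteq> carrier_vec N" using M by (auto simp: rows_def)
  have zc: "z \<in> carrier_vec N" using mat_kernelD(1)[OF M z] .
  have Qz: "Q *\<^sub>v z \<in> carrier_vec N" "Q *\<^sub>v z \<in> list_span N (rows M)"
    using is_orth_projD(1,2)[OF Q] zc by auto
  have "z \<in> orth_compl N (rows M)" using z mat_kernel_eq_orth_compl[OF M] by simp
  then have "(Q *\<^sub>v z) \<bullet> z = 0"
    using orthogonal_list_span[OF rs zc _ Qz(2)] unfolding orth_compl_def by simp
  moreover have "(z - Q *\<^sub>v z) \<bullet> (Q *\<^sub>v z) = 0" using is_orth_projD(3)[OF Q zc Qz(2)] .
  ultimately have "(Q *\<^sub>v z) \<bullet> (Q *\<^sub>v z) = 0"
    using minus_scalar_prod_distrib[OF zc Qz(1) Qz(1)] comm_scalar_prod[OF Qz(1) zc] by simp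
  then show ?thesis using self_scalar_prod_eq_0 Qz(1) by blast
qed

lemma exists_right_factor:
  assumes M: "M \<in> carrier_mat n N" and R: "R \<in> carrier_mat n k"
    and cols_in: "\<And>j. j < k \<Longrightarrow> col R j \<in> list_span n (cols M)"
  shows "\<exists>B \<in> carrier_mat N k. M * B = R"
proof -
  have cs: "set (cols M) \<subseteq> carrier_vec n" using M by (auto simp: cols_def)
  have MM: "mat_of_cols n (cols M) = M" "length (cols M) = N" using M by auto
  have "\<exists>x. x \<in> carrier_vec N \<and> M *\<^sub>v x = col R j" if "j < k" for j
    using list_span_subset_range[OF cs cols_in[OF that]] unfolding MM by blast
  then obtain f where f: "\<And>j. j < k \<Longrightarrow> f j \<in> carrier_vec N \<and> M *\<^sub>v f j = col R j"
    by metis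
  define B where "B = mat N k (\<lambda>(i, j). f j $ i)"
  have Bc: "B \<in> carrier_mat N k" unfolding B_def by simp
  have colB: "col B j = f j" if "j < k" for j
    using f[OF that] that unfolding B_def by (intro eq_vecI) auto
  have "M * B = R"
  proof (rule mat_col_eqI)
    fix j assume "j < dim_col R"
    then have j: "j < k" using R by simp
    show "col (M * B) j = col R j" using col_mult2[OF M Bc j] colB[OF j] f[OF j] by simp
  qed (use M R Bc in auto)
  then show ?thesis using Bc by blast
qed

text \<open>With \<open>Q\<close>, \<open>R\<close> the projections onto the row and column spaces of \<open>M\<close> and \<open>M B\<^sub>0 = R\<close>,
  the matrix \<open>Q B\<^sub>0\<close> satisfies \<open>M (Q B\<^sub>0) = R\<close> and \<open>(Q B\<^sub>0) M = Q\<close>.\<close>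

lemma is_pinv_exists:
  assumes M: "M \<in> carrier_mat n N"
  shows "\<exists>B. is_pinv M B"
proof -
  have rs: "set (rows M) \<subseteq> carrier_vec N" and cs: "set (cols M) \<subseteq> carrier_vec n"
    using M by (auto simp: rows_def cols_def)
  obtain Q where Q: "is_orth_proj N (list_span N (rows M)) Q"
    using orth_proj_list_span_exists[OF rs] by blast
  obtain R where R: "is_orth_proj n (list_span n (cols M)) R"
    using orth_proj_list_span_exists[OF cs] by blast
  interpret row_space: vec_subgroup N "list_span N (rows M)" by (rule list_span_subgroup[OF rs])
  interpret col_space: vec_subgroup n "list_span n (cols M)" by (rule list_span_subgroup[OF cs])
  have Qc: "Q \<in> carrier_mat N N" and Rc: "R \<in> carrier_mat n n"
    using is_orth_projD(1) Q R by auto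
  have RM: "R * M = M"
  proof (rule mat_col_eqI)
    fix j assume j: "j < dim_col M"
    then have "col M j \<in> list_span n (cols M)"
      using generator_in_list_span[OF cs] by (simp add: cols_def)
    then show "col (R * M) j = col M j"
      using col_mult2[OF Rc M, of j] M j col_space.orth_proj_fixes[OF R] by simp
  qed (use Rc M in auto)
  have "col R j \<in> list_span n (cols M)" if "j < n" for j
  proof -
    have "col R j = R *\<^sub>v unit_vec n j" using Rc that by (intro eq_vecI) auto
    then show ?thesis using is_orth_projD(2)[OF R, of "unit_vec n j"] by simp
  qed
  then obtain B0 where B0: "B0 \<in> carrier_mat N n" "M * B0 = R"
    using exists_right_factor[OF M Rc] by blast
  define B where "B = Q * B0"
  have Bc: "B \<in> carrier_mat N n" unfolding B_def using Qc B0 by simp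
  have MB: "M * B = R"
    unfolding B_def using mult_orth_proj_rows[OF M Q] M Qc B0 by (metis assoc_mult_mat)
  have BM: "B * M = Q"
  proof (rule eq_mat_by_mult_vec[of _ N N])
    fix v :: "real vec" assume v: "v \<in> carrier_vec N"
    text \<open>\<open>B\<^sub>0 M v - v\<close> lies in the kernel of \<open>M\<close>, which \<open>Q\<close> annihilates.\<close>
    define z where "z = B0 *\<^sub>v (M *\<^sub>v v) - v"
    have zc: "z \<in> carrier_vec N" unfolding z_def using B0 M v by simp
    have "M *\<^sub>v (B0 *\<^sub>v (M *\<^sub>v v)) = M *\<^sub>v v"
      using B0 RM M Rc v by (metis assoc_mult_mat_vec mult_mat_vec_carrier)
    then have "M *\<^sub>v z = 0\<^sub>v n"
      unfolding z_def using mult_minus_distrib_mat_vec[OF M _ v, of "B0 *\<^sub>v (M *\<^sub>v v)"] B0 M v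
      by simp
    then have "Q *\<^sub>v z = 0\<^sub>v N"
      using orth_proj_rows_kills_kernel[OF M Q] mat_kernelI[OF M zc] by blast
    then have "Q *\<^sub>v (B0 *\<^sub>v (M *\<^sub>v v)) = Q *\<^sub>v v"
      unfolding z_def using mult_minus_distrib_mat_vec[OF Qc _ v, of "B0 *\<^sub>v (M *\<^sub>v v)"] B0 M v Qc
        vec_eq_if_diff_eq_0[of "Q *\<^sub>v (B0 *\<^sub>v (M *\<^sub>v v))" N "Q *\<^sub>v v"] by simp
    moreover have "B * M *\<^sub>v v = Q *\<^sub>v (B0 *\<^sub>v (M *\<^sub>v v))"
      unfolding B_def
      using assoc_mult_mat_vec[OF Qc mult_carrier_mat[OF B0(1) M] v] assoc_mult_mat_vec[OF B0(1) M v]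
        Qc B0(1) M by simp
    ultimately show "B * M *\<^sub>v v = Q *\<^sub>v v" by simp
  qed (use Bc M Qc in auto)
  have "is_pinv M B" unfolding is_pinv_def
  proof (intro conjI)
    show "B \<in> carrier_mat (dim_col M) (dim_row M)" using Bc M by simp
    show "M * B * M = M" using MB RM by simp
    show "B * M * B = B"
      using BM row_space.orth_proj_idem[OF Q] Qc B0 M unfolding B_def by (metis assoc_mult_mat)
    show "transpose_mat (M * B) = M * B" using MB col_space.orth_proj_symmetric[OF R] by simp
    show "transpose_mat (B * M) = B * M" using BM row_space.orth_proj_symmetric[OF Q] by simp
  qed
  then show ?thesis by blast
qed

lemma pinv_is_pinv:
  assumes "M \<in> carrier_mat n N"
  shows "is_pinv M (pinv M)"
proof -
  have "\<exists>!B. is_pinv M B" using is_pinv_exists[OF assms] is_pinv_unique[OF assms] by blast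
  then show ?thesis unfolding pinv_def is_pinv_def[symmetric] by (rule theI')
qed

lemma is_pinv_transpose:
  assumes M: "M \<in> carrier_mat n N" and B: "is_pinv M B"
  shows "is_pinv (transpose_mat M) (transpose_mat B)"
proof -
  have Bc: "B \<in> carrier_mat N n" using is_pinvD(1)[OF B] M by simp
  note p = is_pinvD(2-5)[OF B]
  have t1: "transpose_mat M * transpose_mat B = B * M" using transpose_mult[OF Bc M] p(4) by simp
  have t2: "transpose_mat B * transpose_mat M = M * B" using transpose_mult[OF M Bc] p(3) by simp
  show ?thesis unfolding is_pinv_def
  proof (intro conjI)
    show "transpose_mat B \<in> carrier_mat (dim_col (transpose_mat M)) (dim_row (transpose_mat M))"
      using Bc M by simp
    have "transpose_mat (M * B * M) = transpose_mat M * transpose_mat (M * B)"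
      using transpose_mult[of "M * B" n n M N] M Bc by simp
    also have "\<dots> = transpose_mat M * transpose_mat B * transpose_mat M"
      using transpose_mult[OF M Bc] M Bc by simp
    finally show "transpose_mat M * transpose_mat B * transpose_mat M = transpose_mat M"
      using p by simp
    have "transpose_mat (B * M * B) = transpose_mat B * transpose_mat (B * M)"
      using transpose_mult[of "B * M" N N B n] M Bc by simp
    also have "\<dots> = transpose_mat B * transpose_mat M * transpose_mat B"
      using transpose_mult[OF Bc M] M Bc by simp
    finally show "transpose_mat B * transpose_mat M * transpose_mat B = transpose_mat B"
      using p by simp
    show "transpose_mat (transpose_mat M * transpose_mat B) = transpose_mat M * transpose_mat B"
      using t1 p by simp
    show "transpose_mat (transpose_mat B * transpose_mat M) = transpose_mat B * transpose_mat M"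
      using t2 p by simp
  qed
qed

lemma pinv_transpose:
  assumes M: "M \<in> carrier_mat n N"
  shows "pinv (transpose_mat M) = transpose_mat (pinv M)"
proof -
  have Mt: "transpose_mat M \<in> carrier_mat N n" using M by simp
  show ?thesis
    using is_pinv_unique[OF Mt pinv_is_pinv[OF Mt] is_pinv_transpose[OF M pinv_is_pinv[OF M]]] .
qed

section \<open>Least squares on a subspace\<close>

lemma gram_mult_eq_0:
  fixes M :: "real mat"
  assumes M: "M \<in> carrier_mat n N" and b: "b \<in> carrier_vec N"
    and "transpose_mat M *\<^sub>v (M *\<^sub>v b) = 0\<^sub>v N"
  shows "M *\<^sub>v b = 0\<^sub>v n"
proof -
  have "(M *\<^sub>v b) \<bullet> (M *\<^sub>v b) = (transpose_mat M *\<^sub>v (M *\<^sub>v b)) \<bullet> b"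
    using transpose_vec_mult_scalar[OF M b, of "M *\<^sub>v b"] M b by simp
  also have "\<dots> = 0" using assms b by simp
  finally show ?thesis using self_scalar_prod_eq_0 M b by (meson mult_mat_vec_carrier)
qed

text \<open>If \<open>P w = M\<^sup>T q\<close> and \<open>M P = M\<close>, then \<open>M\<^sup>+ (y - (M\<^sup>+)\<^sup>T w)\<close> solves the normal equations
  \<open>M\<^sup>T M u = M\<^sup>T y - P w\<close>: here \<open>M\<^sup>T (M\<^sup>+)\<^sup>T w = M\<^sup>+ M P w = M\<^sup>+ M M\<^sup>T q = M\<^sup>T q\<close>.\<close>

lemma pinv_normal_equation:
  fixes M P :: "real mat"
  assumes M: "M \<in> carrier_mat n N" and P: "P \<in> carrier_mat N N" and MP: "M * P = M"
    and y: "y \<in> carrier_vec n" and q: "q \<in> carrier_vec n" and w: "w \<in> carrier_vec N"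
    and Pw: "transpose_mat M *\<^sub>v q = P *\<^sub>v w"
  shows "transpose_mat M *\<^sub>v (M *\<^sub>v (pinv M *\<^sub>v (y - transpose_mat (pinv M) *\<^sub>v w)))
           = transpose_mat M *\<^sub>v (y - q)"
proof -
  define B where "B = pinv M"
  define T where "T = transpose_mat M"
  have B: "is_pinv M B" unfolding B_def using pinv_is_pinv[OF M] .
  have Bc: "B \<in> carrier_mat N n" using is_pinvD(1)[OF B] M by simp
  have Tc: "T \<in> carrier_mat N n" unfolding T_def using M by simp
  have BMc: "B * M \<in> carrier_mat N N" using Bc M by simp
  have TBt: "T * transpose_mat B = B * M"
    unfolding T_def using transpose_mult[OF Bc M] is_pinvD(5)[OF B] by simp
  define z where "z = y - transpose_mat B *\<^sub>v w"
  have zc: "z \<in> carrier_vec n" unfolding z_def using y w Bc by simp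
  have BTc: "transpose_mat B \<in> carrier_mat n N" using Bc by simp
  have "T *\<^sub>v (transpose_mat B *\<^sub>v w) = (B * M) *\<^sub>v w"
    using TBt assoc_mult_mat_vec[OF Tc BTc w] by simp
  also have "\<dots> = (B * M) *\<^sub>v (P *\<^sub>v w)"
    using MP assoc_mult_mat_vec[OF Bc M, of w] assoc_mult_mat_vec[OF M P w] M P Bc w by simp
  also have "\<dots> = (B * M * T) *\<^sub>v q"
    using Pw assoc_mult_mat_vec[OF BMc Tc q] by (simp add: T_def)
  also have "\<dots> = T *\<^sub>v q" using is_pinv_mult_transpose[OF M B] unfolding T_def by simp
  finally have TBtw: "T *\<^sub>v (transpose_mat B *\<^sub>v w) = T *\<^sub>v q" .
  have "T *\<^sub>v (M *\<^sub>v (B *\<^sub>v z)) = (T * (M * B)) *\<^sub>v z"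
    using assoc_mult_mat_vec[OF Tc mult_carrier_mat[OF M Bc] zc] assoc_mult_mat_vec[OF M Bc zc] by simp
  also have "\<dots> = T *\<^sub>v z" using is_pinv_transpose_mult[OF M B] unfolding T_def by simp
  also have "\<dots> = T *\<^sub>v y - T *\<^sub>v q"
    unfolding z_def using TBtw mult_minus_distrib_mat_vec[OF Tc y, of "transpose_mat B *\<^sub>v w"] Bc w
    by simp
  also have "\<dots> = T *\<^sub>v (y - q)" using mult_minus_distrib_mat_vec[OF Tc y q] by simp
  finally show ?thesis unfolding T_def B_def z_def .
qed

text \<open>\<open>(X P)\<^sup>+ = (X P)\<^sup>T ((X P)\<^sup>+)\<^sup>T (X P)\<^sup>+ = P X\<^sup>T \<dots>\<close> has its range inside the range of \<open>P\<close>.\<close>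

lemma pinv_mult_proj_mem:
  assumes X: "X \<in> carrier_mat n N" and P: "is_orth_proj N S P" and S: "vec_subgroup N S"
    and z: "z \<in> carrier_vec n"
  shows "pinv (X * P) *\<^sub>v z \<in> S"
proof -
  define M where "M = X * P"
  define B where "B = pinv M"
  have Pc: "P \<in> carrier_mat N N" using is_orth_projD(1)[OF P] .
  have M: "M \<in> carrier_mat n N" unfolding M_def using X Pc by simp
  have B: "is_pinv M B" unfolding B_def using pinv_is_pinv[OF M] .
  have Bc: "B \<in> carrier_mat N n" using is_pinvD(1)[OF B] M by simp
  have TM: "transpose_mat M = P * transpose_mat X"
    unfolding M_def using transpose_mult[OF X Pc] vec_subgroup.orth_proj_symmetric[OF S P] by simp
  have XTc: "transpose_mat X \<in> carrier_mat N n" and BTc: "transpose_mat B \<in> carrier_mat n N"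
    using X Bc by auto
  define C where "C = transpose_mat X * (transpose_mat B * B)"
  have Cc: "C \<in> carrier_mat N n" unfolding C_def using XTc BTc Bc by simp
  have "B = B * M * B" using is_pinvD(3)[OF B] by simp
  also have "\<dots> = transpose_mat (B * M) * B" using is_pinvD(5)[OF B] by simp
  also have "\<dots> = P * C"
    unfolding C_def using transpose_mult[OF Bc M] TM
      assoc_mult_mat[OF Pc mult_carrier_mat[OF XTc BTc] Bc] assoc_mult_mat[OF XTc BTc Bc]
      assoc_mult_mat[OF Pc XTc BTc] by simp
  finally have "B *\<^sub>v z = P *\<^sub>v (C *\<^sub>v z)" using assoc_mult_mat_vec[OF Pc Cc z] by simp
  then show ?thesis
    unfolding B_def M_def using is_orth_projD(2)[OF P] Cc z by simp
qed

lemma proj_normal_equation: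
  assumes X: "X \<in> carrier_mat n N" and P: "is_orth_proj N S P" and S: "vec_subgroup N S"
    and q: "q \<in> carrier_vec n" and w: "w \<in> carrier_vec N"
    and stat: "\<And>d. d \<in> S \<Longrightarrow> q \<bullet> (X *\<^sub>v d) = w \<bullet> d"
  shows "transpose_mat (X * P) *\<^sub>v q = P *\<^sub>v w"
proof -
  have Pc: "P \<in> carrier_mat N N" using is_orth_projD(1)[OF P] .
  have XTc: "transpose_mat X \<in> carrier_mat N n" using X by simp
  define h where "h = transpose_mat X *\<^sub>v q - w"
  have hc: "h \<in> carrier_vec N" unfolding h_def using XTc q w by simp
  have "P *\<^sub>v h = 0\<^sub>v N"
  proof (rule eq_vec_by_scalar_prod[of _ N])
    fix v :: "real vec" assume v: "v \<in> carrier_vec N"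
    have Pv: "P *\<^sub>v v \<in> carrier_vec N" "P *\<^sub>v v \<in> S" using Pc v is_orth_projD(2)[OF P v] by auto
    have "(P *\<^sub>v h) \<bullet> v = h \<bullet> (P *\<^sub>v v)"
      using transpose_vec_mult_scalar[OF Pc v hc] vec_subgroup.orth_proj_symmetric[OF S P] by simp
    also have "\<dots> = q \<bullet> (X *\<^sub>v (P *\<^sub>v v)) - w \<bullet> (P *\<^sub>v v)"
      unfolding h_def using minus_scalar_prod_distrib[of _ N w "P *\<^sub>v v"] XTc q w Pv(1)
        transpose_vec_mult_scalar[OF X Pv(1) q] by simp
    also have "\<dots> = 0" using stat[OF Pv(2)] by simp
    finally show "(P *\<^sub>v h) \<bullet> v = 0\<^sub>v N \<bullet> v" using v by simp
  qed (use Pc hc in auto)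
  then have "P *\<^sub>v (transpose_mat X *\<^sub>v q) = P *\<^sub>v w"
    unfolding h_def using mult_minus_distrib_mat_vec[OF Pc, of "transpose_mat X *\<^sub>v q" w] XTc q w
      vec_eq_if_diff_eq_0[of "P *\<^sub>v (transpose_mat X *\<^sub>v q)" N "P *\<^sub>v w"] Pc by simp
  then show ?thesis
    using transpose_mult[OF X Pc] vec_subgroup.orth_proj_symmetric[OF S P]
      assoc_mult_mat_vec[OF Pc XTc q] by simp
qed

lemma pinv_solution_on_subspace:
  assumes X: "X \<in> carrier_mat n N" and y: "y \<in> carrier_vec n" and w: "w \<in> carrier_vec N"
    and P: "is_orth_proj N S P" and S: "vec_subgroup N S" and \<phi>: "\<phi> \<in> S"
    and stat: "\<And>d. d \<in> S \<Longrightarrow> (y - X *\<^sub>v \<phi>) \<bullet> (X *\<^sub>v d) = w \<bullet> d"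
  shows "\<phi> - pinv (X * P) *\<^sub>v (y - pinv (P * transpose_mat X) *\<^sub>v w) \<in> mat_kernel X \<inter> S"
proof -
  interpret S: vec_subgroup N S by (rule S)
  define M where "M = X * P"
  define B where "B = pinv M"
  define u where "u = B *\<^sub>v (y - transpose_mat B *\<^sub>v w)"
  define q where "q = y - X *\<^sub>v \<phi>"
  define b where "b = \<phi> - u"
  have Pc: "P \<in> carrier_mat N N" using is_orth_projD(1)[OF P] .
  have M: "M \<in> carrier_mat n N" unfolding M_def using X Pc by simp
  have Bc: "B \<in> carrier_mat N n" using is_pinvD(1)[OF pinv_is_pinv[OF M]] M unfolding B_def by simp
  have \<phi>c: "\<phi> \<in> carrier_vec N" using \<phi> S.subset_carrier by auto
  have qc: "q \<in> carrier_vec n" unfolding q_def using y X \<phi>c by simp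
  have TM: "transpose_mat M = P * transpose_mat X"
    unfolding M_def using transpose_mult[OF X Pc] S.orth_proj_symmetric[OF P] by simp
  have u_eq: "u = pinv (X * P) *\<^sub>v (y - pinv (P * transpose_mat X) *\<^sub>v w)"
    unfolding u_def B_def M_def using pinv_transpose[OF M] TM unfolding M_def by simp
  have "y - transpose_mat B *\<^sub>v w \<in> carrier_vec n" using Bc y w by simp
  from pinv_mult_proj_mem[OF X P S this] have uS: "u \<in> S" unfolding u_def B_def M_def .
  have MP: "M * P = M" unfolding M_def using S.orth_proj_idem[OF P] X Pc by simp
  have M\<phi>: "M *\<^sub>v \<phi> = X *\<^sub>v \<phi>" unfolding M_def using X Pc \<phi>c S.orth_proj_fixes[OF P \<phi>] by simp
  have "transpose_mat M *\<^sub>v (M *\<^sub>v u) = transpose_mat M *\<^sub>v (y - q)"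
    unfolding u_def B_def
    by (rule pinv_normal_equation[OF M Pc MP y qc w])
      (use proj_normal_equation[OF X P S qc w] stat in \<open>simp add: M_def q_def\<close>)
  also have "y - q = M *\<^sub>v \<phi>" unfolding q_def M\<phi> using y X \<phi>c by (intro eq_vecI) auto
  finally have "transpose_mat M *\<^sub>v (M *\<^sub>v b) = 0\<^sub>v N"
    unfolding b_def using M \<phi>c uS S.subset_carrier
    by (auto simp: mult_minus_distrib_mat_vec[of _ n N] mult_minus_distrib_mat_vec[of _ N n])
  then have "M *\<^sub>v b = 0\<^sub>v n" using gram_mult_eq_0[OF M] \<phi>c uS S.subset_carrier unfolding b_def by auto
  moreover have bS: "b \<in> S" unfolding b_def using S.diff_closed[OF \<phi> uS] .
  ultimately have "X *\<^sub>v b = 0\<^sub>v n"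
    unfolding M_def using S.orth_proj_fixes[OF P bS] X Pc S.subset_carrier by auto
  then have "b \<in> mat_kernel X" using mat_kernelI[OF X] bS S.subset_carrier by blast
  then show ?thesis using bS unfolding b_def u_eq by simp
qed

section \<open>Stationarity along a face of the feasible set\<close>

definition quad_lin_obj :: "real mat \<Rightarrow> real vec \<Rightarrow> real vec \<Rightarrow> real vec \<Rightarrow> real" where
  "quad_lin_obj X y w \<phi> = 1/2 * ((y - X *\<^sub>v \<phi>) \<bullet> (y - X *\<^sub>v \<phi>)) + w \<bullet> \<phi>"

lemma quad_lin_obj_along_line:
  assumes X: "X \<in> carrier_mat n N" and y: "y \<in> carrier_vec n" and w: "w \<in> carrier_vec N"
    and \<phi>: "\<phi> \<in> carrier_vec N" and d: "d \<in> carrier_vec N"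
  shows "quad_lin_obj X y w (\<phi> + t \<cdot>\<^sub>v d) = quad_lin_obj X y w \<phi>
           - t * ((y - X *\<^sub>v \<phi>) \<bullet> (X *\<^sub>v d) - w \<bullet> d) + t\<^sup>2 * ((X *\<^sub>v d) \<bullet> (X *\<^sub>v d) / 2)"
proof -
  define q where "q = y - X *\<^sub>v \<phi>"
  define a where "a = X *\<^sub>v d"
  have qc: "q \<in> carrier_vec n" and ac: "a \<in> carrier_vec n"
    unfolding q_def a_def using X y \<phi> d by auto
  have "y - X *\<^sub>v (\<phi> + t \<cdot>\<^sub>v d) = q - t \<cdot>\<^sub>v a"
    unfolding q_def a_def using X y \<phi> d
    by (simp add: mult_add_distrib_mat_vec[of _ n N] mult_mat_vec[of _ n N]) (intro eq_vecI; simp)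
  moreover have "(q - t \<cdot>\<^sub>v a) \<bullet> (q - t \<cdot>\<^sub>v a) = q \<bullet> q - 2 * t * (q \<bullet> a) + t\<^sup>2 * (a \<bullet> a)"
    using qc ac by (simp add: scalar_prod_def algebra_simps power2_eq_square sum.distrib
        sum_subtractf sum_distrib_left)
  moreover have "w \<bullet> (\<phi> + t \<cdot>\<^sub>v d) = w \<bullet> \<phi> + t * (w \<bullet> d)"
    using scalar_prod_add_distrib[OF w \<phi>, of "t \<cdot>\<^sub>v d"] d w by simp
  ultimately show ?thesis
    unfolding quad_lin_obj_def q_def[symmetric] a_def[symmetric] by (simp add: algebra_simps)
qed

lemma nonpos_if_eventually_le_quadratic:
  fixes g c :: real
  assumes "eventually (\<lambda>t. t * g \<le> t\<^sup>2 * c) (at_right 0)"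
  shows "g \<le> 0"
proof -
  have "eventually (\<lambda>t. g \<le> t * c) (at_right 0)"
    using assms eventually_at_right_less[of "0::real"]
  proof eventually_elim
    case (elim t)
    then show ?case by (simp add: power2_eq_square mult.assoc)
  qed
  moreover have "((\<lambda>t. t * c) \<longlongrightarrow> 0) (at_right (0::real))"
    by (auto intro!: tendsto_eq_intros)
  ultimately show ?thesis using tendsto_lowerbound[of "\<lambda>t. t * c" 0 "at_right 0" g] by simp
qed

lemma eq_0_if_eventually_le_quadratic:
  fixes g c :: real
  assumes "eventually (\<lambda>t. t * g \<le> t\<^sup>2 * c) (at 0)"
  shows "g = 0"
proof -
  have "eventually (\<lambda>t. t * g \<le> t\<^sup>2 * c) (at_right 0)"
    and "eventually (\<lambda>t. t * g \<le> t\<^sup>2 * c) (at_left 0)"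
    using assms eventually_at_split by auto
  then have "eventually (\<lambda>t. t * g \<le> t\<^sup>2 * c) (at_right 0)"
    and "eventually (\<lambda>t. t * (- g) \<le> t\<^sup>2 * c) (at_right 0)"
    unfolding eventually_at_left_to_right by simp_all
  then have "g \<le> 0" and "- g \<le> 0" using nonpos_if_eventually_le_quadratic by blast+
  then show ?thesis by simp
qed

lemma stationary_if_local_min_along_line:
  assumes X: "X \<in> carrier_mat n N" and y: "y \<in> carrier_vec n" and w: "w \<in> carrier_vec N"
    and \<phi>: "\<phi> \<in> carrier_vec N" and d: "d \<in> carrier_vec N"
    and min: "eventually (\<lambda>t. quad_lin_obj X y w \<phi> \<le> quad_lin_obj X y w (\<phi> + t \<cdot>\<^sub>v d)) (at 0)"
  shows "(y - X *\<^sub>v \<phi>) \<bullet> (X *\<^sub>v d) = w \<bullet> d"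
proof -
  have "eventually (\<lambda>t. t * ((y - X *\<^sub>v \<phi>) \<bullet> (X *\<^sub>v d) - w \<bullet> d)
      \<le> t\<^sup>2 * ((X *\<^sub>v d) \<bullet> (X *\<^sub>v d) / 2)) (at 0)"
    using min by eventually_elim (simp add: quad_lin_obj_along_line[OF X y w \<phi> d])
  then show ?thesis using eq_0_if_eventually_le_quadratic by fastforce
qed

lemma rows_out_carrier:
  assumes "D \<in> carrier_mat r m"
  shows "rows_out D A \<in> carrier_mat (dim_row (rows_out D A)) m"
proof (rule carrier_matI)
  show "dim_col (rows_out D A) = m"
    unfolding rows_out_def mat_of_rows_carrier(3) using assms by (rule carrier_matD(2))
qed simp
lemma mat_kernel_rows_out:
  assumes D: "D \<in> carrier_mat r m"
  shows "v \<in> mat_kernel (rows_out D A) \<longleftrightarrow>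
           v \<in> carrier_vec m \<and> (\<forall>i < r. i \<notin> A \<longrightarrow> row D i \<bullet> v = 0)"
proof -
  define rs where "rs = [row D i. i \<leftarrow> [0..<r], i \<notin> A]"
  have rs: "set rs \<subseteq> carrier_vec m" unfolding rs_def using D by auto
  have "rows_out D A = mat_of_rows m rs" unfolding rows_out_def rs_def using D by simp
  then have "mat_kernel (rows_out D A) = orth_compl m rs"
    using mat_kernel_eq_orth_compl[of _ "length rs" m] rs by simp
  then show ?thesis unfolding orth_compl_def rs_def by auto
qed

lemma eventually_nonneg_along_face:
  assumes D: "D \<in> carrier_mat r m" and \<phi>: "\<phi> \<in> carrier_vec m"
    and nonneg: "\<And>i. i < r \<Longrightarrow> 0 \<le> (D *\<^sub>v \<phi>) $ i"
    and d: "d \<in> mat_kernel (rows_out D {i. i < r \<and> 0 < (D *\<^sub>v \<phi>) $ i})"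
  shows "eventually (\<lambda>t. \<forall>i < r. 0 \<le> (D *\<^sub>v (\<phi> + t \<cdot>\<^sub>v d)) $ i) (at 0)"
proof -
  have dc: "d \<in> carrier_vec m" using d mat_kernel_rows_out[OF D] by blast
  have Dt: "(D *\<^sub>v (\<phi> + t \<cdot>\<^sub>v d)) $ i = (D *\<^sub>v \<phi>) $ i + t * (row D i \<bullet> d)" if "i < r" for i t
    using that D \<phi> dc by (simp add: scalar_prod_add_distrib[of _ m])
  have "eventually (\<lambda>t. 0 \<le> (D *\<^sub>v \<phi>) $ i + t * (row D i \<bullet> d)) (at 0)" if i: "i < r" for i
  proof (cases "0 < (D *\<^sub>v \<phi>) $ i")
    case True
    have "((\<lambda>t. (D *\<^sub>v \<phi>) $ i + t * (row D i \<bullet> d)) \<longlongrightarrow> (D *\<^sub>v \<phi>) $ i) (at 0)"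
      by (auto intro!: tendsto_eq_intros)
    from order_tendstoD(1)[OF this True] show ?thesis by eventually_elim simp
  next
    case False
    then have "(D *\<^sub>v \<phi>) $ i = 0" and "row D i \<bullet> d = 0"
      using nonneg[OF i] d mat_kernel_rows_out[OF D] i by force+
    then show ?thesis by simp
  qed
  then have "eventually (\<lambda>t. \<forall>i \<in> {..<r}. 0 \<le> (D *\<^sub>v \<phi>) $ i + t * (row D i \<bullet> d)) (at 0)"
    by (simp add: eventually_ball_finite)
  then show ?thesis by eventually_elim (simp add: Dt)
qed

lemma inactive_rows_kernel:
  assumes D: "D \<in> carrier_mat r m" and \<phi>: "\<phi> \<in> carrier_vec m"
    and nonneg: "\<And>i. i < r \<Longrightarrow> 0 \<le> (D *\<^sub>v \<phi>) $ i"
  shows "\<phi> \<in> mat_kernel (rows_out D {i. i < r \<and> 0 < (D *\<^sub>v \<phi>) $ i})"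
  unfolding mat_kernel_rows_out[OF D] using \<phi> D nonneg by (auto simp: order.order_iff_strict)

lemma stationary_on_face:
  fixes D L X :: "real mat"
  assumes D: "D \<in> carrier_mat r N" and L: "L \<in> carrier_mat k N" and X: "X \<in> carrier_mat n N"
    and y: "y \<in> carrier_vec n" and w: "w \<in> carrier_vec N" and \<phi>: "\<phi> \<in> carrier_vec N"
    and D\<phi>: "\<And>i. i < r \<Longrightarrow> 0 \<le> (D *\<^sub>v \<phi>) $ i" and L\<phi>: "L *\<^sub>v \<phi> = 0\<^sub>v k"
    and opt: "\<And>\<psi>. \<psi> \<in> carrier_vec N \<Longrightarrow> \<forall>i < r. 0 \<le> (D *\<^sub>v \<psi>) $ i \<Longrightarrow> L *\<^sub>v \<psi> = 0\<^sub>v k \<Longrightarrow>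
      quad_lin_obj X y w \<phi> \<le> quad_lin_obj X y w \<psi>"
    and d: "d \<in> mat_kernel L \<inter> mat_kernel (rows_out D {i. i < r \<and> 0 < (D *\<^sub>v \<phi>) $ i})"
  shows "(y - X *\<^sub>v \<phi>) \<bullet> (X *\<^sub>v d) = w \<bullet> d"
proof -
  have dc: "d \<in> carrier_vec N" using d mat_kernelD(1)[OF L] by blast
  have dK: "d \<in> mat_kernel (rows_out D {i. i < r \<and> 0 < (D *\<^sub>v \<phi>) $ i})" using d by blast
  have "L *\<^sub>v (\<phi> + t \<cdot>\<^sub>v d) = L *\<^sub>v \<phi> + t \<cdot>\<^sub>v (L *\<^sub>v d)" for t
    using mult_add_distrib_mat_vec[OF L \<phi>, of "t \<cdot>\<^sub>v d"] mult_mat_vec[OF L dc] dc by simp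
  moreover have "L *\<^sub>v d = 0\<^sub>v k" using d mat_kernelD(2)[OF L] by blast
  moreover have "t \<cdot>\<^sub>v 0\<^sub>v k = (0\<^sub>v k :: real vec)" for t by (intro eq_vecI) auto
  ultimately have Lt: "L *\<^sub>v (\<phi> + t \<cdot>\<^sub>v d) = 0\<^sub>v k" for t using L\<phi> by simp
  have "eventually (\<lambda>t. quad_lin_obj X y w \<phi> \<le> quad_lin_obj X y w (\<phi> + t \<cdot>\<^sub>v d)) (at 0)"
    using eventually_nonneg_along_face[OF D \<phi> D\<phi> dK]
  proof (rule eventually_mono)
    fix t assume "\<forall>i < r. 0 \<le> (D *\<^sub>v (\<phi> + t \<cdot>\<^sub>v d)) $ i"
    then show "quad_lin_obj X y w \<phi> \<le> quad_lin_obj X y w (\<phi> + t \<cdot>\<^sub>v d)"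
      using opt Lt \<phi> dc by simp
  qed
  then show ?thesis using stationary_if_local_min_along_line[OF X y w \<phi> dc] by simp
qed

section \<open>The strong hierarchical lasso\<close>

lemma Xtil_carrier: "X \<in> carrier_mat n p \<Longrightarrow> Xtil X \<in> carrier_mat n (shl_dim p)"
  unfolding Xtil_def Let_def by simp

lemma wvec_carrier: "wvec p lam \<in> carrier_vec (shl_dim p)"
  unfolding wvec_def by simp

lemma Dmat_carrier: "Dmat p \<in> carrier_mat (dim_row (Dmat p)) (shl_dim p)"
  unfolding carrier_mat_def Dmat_def mat_of_rows_def by simp

lemma Lmat_carrier: "Lmat p \<in> carrier_mat (dim_row (Lmat p)) (shl_dim p)"
  unfolding carrier_mat_def Lmat_def mat_of_rows_def by simp

lemma shl_obj_eq_quad_lin_obj: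
  "X \<in> carrier_mat n p \<Longrightarrow> shl_obj X y lam = quad_lin_obj (Xtil X) y (wvec p lam)"
  unfolding shl_obj_def quad_lin_obj_def by auto

theorem lemma1:
  fixes X :: "real mat" and y :: "real vec" and lam :: real and n p :: nat
    and \<phi>h :: "real vec"
  assumes X: "X \<in> carrier_mat n p"
    and y: "y \<in> carrier_vec n"
    and lam: "lam > 0"
    and feas: "shl_feasible p \<phi>h"
    and opt: "\<forall>\<phi>. shl_feasible p \<phi> \<longrightarrow> shl_obj X y lam \<phi>h \<le> shl_obj X y lam \<phi>"
  shows "let A = active_set p \<phi>h;
             DmA = rows_out (Dmat p) A;
             P = proj_mat (shl_dim p) (mat_kernel (Lmat p) \<inter> mat_kernel DmA);
             u = pinv (Xtil X * P) *\<^sub>v (y - pinv (P * transpose_mat (Xtil X)) *\<^sub>v wvec p lam)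
         in \<exists>b. b \<in> mat_kernel (Xtil X) \<inter> mat_kernel (Lmat p) \<inter> mat_kernel DmA \<and>
                \<phi>h = u + b \<and> (\<forall>i \<in> A. (Dmat p *\<^sub>v (u + b)) $ i > 0)"
proof -
  define N D L A where "N = shl_dim p" and "D = Dmat p" and "L = Lmat p"
    and "A = active_set p \<phi>h"
  define S where "S = mat_kernel L \<inter> mat_kernel (rows_out D A)"
  define u where "u = pinv (Xtil X * proj_mat N S) *\<^sub>v
    (y - pinv (proj_mat N S * transpose_mat (Xtil X)) *\<^sub>v wvec p lam)"
  have Xt: "Xtil X \<in> carrier_mat n N" and w: "wvec p lam \<in> carrier_vec N"
    and D: "D \<in> carrier_mat (dim_row D) N" and L: "L \<in> carrier_mat (dim_row L) N"
    unfolding N_def D_def L_def using Xtil_carrier[OF X] wvec_carrier Dmat_carrier Lmat_carrier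
    by auto
  have \<phi>: "\<phi>h \<in> carrier_vec N" and D\<phi>: "\<And>i. i < dim_row D \<Longrightarrow> 0 \<le> (D *\<^sub>v \<phi>h) $ i"
    and L\<phi>: "L *\<^sub>v \<phi>h = 0\<^sub>v (dim_row L)"
    using feas unfolding shl_feasible_def N_def D_def L_def by auto
  have A: "A = {i. i < dim_row D \<and> 0 < (D *\<^sub>v \<phi>h) $ i}"
    unfolding A_def active_set_def D_def ..
  have S: "vec_subgroup N S" and P: "is_orth_proj N S (proj_mat N S)"
    unfolding S_def using proj_mat_kernel_inter[OF L rows_out_carrier[OF D]] by auto
  have \<phi>S: "\<phi>h \<in> S"
    unfolding S_def A using mat_kernelI[OF L \<phi> L\<phi>] inactive_rows_kernel[OF D \<phi> D\<phi>] by simp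
  have "quad_lin_obj (Xtil X) y (wvec p lam) \<phi>h \<le> quad_lin_obj (Xtil X) y (wvec p lam) \<psi>"
    if "\<psi> \<in> carrier_vec N" "\<forall>i < dim_row D. 0 \<le> (D *\<^sub>v \<psi>) $ i" "L *\<^sub>v \<psi> = 0\<^sub>v (dim_row L)"
    for \<psi>
    using opt that unfolding shl_feasible_def shl_obj_eq_quad_lin_obj[OF X] N_def D_def L_def
    by blast
  from stationary_on_face[OF D L Xt y w \<phi> D\<phi> L\<phi> this]
  have "\<phi>h - u \<in> mat_kernel (Xtil X) \<inter> S"
    unfolding u_def using pinv_solution_on_subspace[OF Xt y w P S \<phi>S] S_def A by blast
  then obtain b where b: "b \<in> mat_kernel (Xtil X) \<inter> S" and b_eq: "b = \<phi>h - u" by blast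
  have "b \<in> carrier_vec N" using b mat_kernelD(1)[OF Xt] by blast
  then have "u \<in> carrier_vec N" unfolding b_eq carrier_vec_def by simp
  then have \<phi>_eq: "\<phi>h = u + b" unfolding b_eq using \<phi> by (intro eq_vecI) auto
  have "\<forall>i \<in> A. (D *\<^sub>v (u + b)) $ i > 0" unfolding \<phi>_eq[symmetric] A by blast
  then show ?thesis
    unfolding Let_def A_def[symmetric] D_def[symmetric] L_def[symmetric] N_def[symmetric]
      S_def[symmetric] u_def[symmetric]
    using b \<phi>_eq unfolding S_def by blast
qed

end
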